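(* Let $N\ge3$, let $A=(\mathbb{Z}/N\mathbb{Z})^2$ and let $I=\mathbb{Q}[A]^0$ be the augmentation ideal (degree-$0$ elements) of the group algebra $\mathbb{Q}[A]$. Let $H=A\rtimes\{\pm1\}$ act on $I\otimes I$ by $a\cdot(d_0\otimes d_1)=([a]d_0)\otimes([-a]d_1)$ for $a\in A$ and $(-1)\cdot(d_0\otimes d_1)=-(d_1\otimes d_0)$, and let $\varepsilon:H\to\{\pm1\}$ be the canonical projection. Then the multiplication map $\mu:I\otimes I\to I$, $d_0\otimes d_1\mapsto d_0d_1$, induces an isomorphism $(I\otimes I)^\varepsilon\xrightarrow{\cong}I$, where $(I\otimes I)^\varepsilon=\{x : h\cdot x=\varepsilon(h)x\ \forall h\in H\}$.
   Context: For $a\in A$, $[a]$ denotes the corresponding basis element of $\mathbb{Q}[A]$, and products are taken in the group algebra. *)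

theory Defs
  imports Complex_Main
begin

type_synonym elt = "int \<times> int"

text \<open>The group A = (Z/NZ)^2, represented by the carrier {0..<N} x {0..<N}
  with componentwise addition mod N.\<close>
definition grpA :: "int \<Rightarrow> elt set" where
  "grpA N = {0..<N} \<times> {0..<N}"

definition addA :: "int \<Rightarrow> elt \<Rightarrow> elt \<Rightarrow> elt" where
  "addA N a b = ((fst a + fst b) mod N, (snd a + snd b) mod N)"

definition negA :: "int \<Rightarrow> elt \<Rightarrow> elt" where
  "negA N a = ((- fst a) mod N, (- snd a) mod N)"

text \<open>Group algebra Q[A]: rational functions on A (zero off the carrier);
  an element f stands for the sum of f(a)[a].\<close>
definition QA :: "int \<Rightarrow> (elt \<Rightarrow> rat) set" where
  "QA N = {f. \<forall>x. x \<notin> grpA N \<longrightarrow> f x = 0}"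

definition aug :: "int \<Rightarrow> (elt \<Rightarrow> rat) set" where
  "aug N = {f \<in> QA N. (\<Sum>x\<in>grpA N. f x) = 0}"

text \<open>Q[A] (x) Q[A] = Q[A x A]: F stands for the sum of F(x,y) [x](x)[y].\<close>
definition QA2 :: "int \<Rightarrow> (elt \<Rightarrow> elt \<Rightarrow> rat) set" where
  "QA2 N = {F. \<forall>x y. x \<notin> grpA N \<or> y \<notin> grpA N \<longrightarrow> F x y = 0}"

text \<open>I (x) I inside Q[A] (x) Q[A]: the common kernel of the two partial augmentations.\<close>
definition augTensor :: "int \<Rightarrow> (elt \<Rightarrow> elt \<Rightarrow> rat) set" where
  "augTensor N = {F \<in> QA2 N. (\<forall>x. (\<Sum>y\<in>grpA N. F x y) = 0) \<and> (\<forall>y. (\<Sum>x\<in>grpA N. F x y) = 0)}"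

text \<open>Action of H = A x| {+-1}; an element (a, s) with s = True meaning +1 and
  s = False meaning -1 is the product a * s (first s, then a).
  a . (d0 (x) d1) = [a]d0 (x) [-a]d1, (-1) . (d0 (x) d1) = - d1 (x) d0.\<close>
definition hact :: "int \<Rightarrow> elt \<times> bool \<Rightarrow> (elt \<Rightarrow> elt \<Rightarrow> rat) \<Rightarrow> (elt \<Rightarrow> elt \<Rightarrow> rat)" where
  "hact N h F = (\<lambda>x y. if x \<in> grpA N \<and> y \<in> grpA N then
      (if snd h then F (addA N x (negA N (fst h))) (addA N y (fst h))
       else - F (addA N y (fst h)) (addA N x (negA N (fst h))))
    else 0)"

definition eps :: "elt \<times> bool \<Rightarrow> rat" where
  "eps h = (if snd h then 1 else -1)"

definition epsPart :: "int \<Rightarrow> (elt \<Rightarrow> elt \<Rightarrow> rat) set" where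
  "epsPart N = {F \<in> augTensor N. \<forall>h. fst h \<in> grpA N \<longrightarrow>
                   hact N h F = (\<lambda>x y. eps h * F x y)}"

definition mu :: "int \<Rightarrow> (elt \<Rightarrow> elt \<Rightarrow> rat) \<Rightarrow> (elt \<Rightarrow> rat)" where
  "mu N F = (\<lambda>c. if c \<in> grpA N then
      (\<Sum>x\<in>grpA N. \<Sum>y\<in>grpA N. if addA N x y = c then F x y else 0) else 0)"

end

theory Submission
  imports Defs
begin

text \<open>Invariance under the translations a \<in> A forces F(x, y) = F(x + y, 0), so an element
  of (I \<otimes> I)^\<epsilon> is determined by the single function c \<mapsto> F(c, 0), which lies in I;
  conversely every g \<in> I arises this way, and the invariance under -1 is then automatic.
  Along this parametrisation the multiplication map is multiplication by |A|, a bijection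
  of I.\<close>

lemma addA_in_grpA: "N > 0 \<Longrightarrow> addA N x y \<in> grpA N"
  by (simp add: addA_def grpA_def)

lemma addA_commute: "addA N x y = addA N y x"
  by (simp add: addA_def add.commute)

lemma negA_negA: "N > 0 \<Longrightarrow> y \<in> grpA N \<Longrightarrow> negA N (negA N y) = y"
  by (cases y) (auto simp: negA_def grpA_def mod_simps)

lemma addA_negA_right: "addA N y (negA N y) = (0, 0)"
  by (cases y) (simp add: negA_def addA_def mod_simps)

lemma addA_translate: "addA N (addA N x (negA N a)) (addA N y a) = addA N x y"
  by (cases x, cases y, cases a) (simp add: negA_def addA_def mod_simps)

lemma mod_add_eq_iff:
  fixes N x y c :: int
  assumes "N > 0" "0 \<le> y" "y < N" "0 \<le> c" "c < N"
  shows "(x + y) mod N = c \<longleftrightarrow> y = (c + (- x) mod N) mod N"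
proof
  assume "(x + y) mod N = c"
  then have "(c + (- x) mod N) mod N = ((x + y) mod N + (- x) mod N) mod N" by simp
  also have "\<dots> = y" using assms by (simp add: mod_simps)
  finally show "y = (c + (- x) mod N) mod N" by simp
next
  assume "y = (c + (- x) mod N) mod N"
  then have "(x + y) mod N = (x + (c + (- x) mod N) mod N) mod N" by simp
  also have "\<dots> = c" using assms by (simp add: mod_simps)
  finally show "(x + y) mod N = c" .
qed

lemma addA_eq_iff:
  assumes "N > 0" "y \<in> grpA N" "c \<in> grpA N"
  shows "addA N x y = c \<longleftrightarrow> y = addA N c (negA N x)"
  using assms mod_add_eq_iff[of N "snd y" "snd c" "snd x"] mod_add_eq_iff[of N "fst y" "fst c" "fst x"]
  by (cases x, cases y, cases c) (auto simp: addA_def negA_def grpA_def)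

lemma bij_betw_addA:
  assumes "N > 0"
  shows "bij_betw (addA N x) (grpA N) (grpA N)"
proof (rule bij_betw_imageI)
  show "inj_on (addA N x) (grpA N)"
    by (rule inj_onI) (metis addA_eq_iff[OF assms] addA_in_grpA[OF assms])
  have "c \<in> addA N x ` grpA N" if "c \<in> grpA N" for c
    using addA_eq_iff[OF assms addA_in_grpA[OF assms] that, of x] addA_in_grpA[OF assms]
    by (metis imageI)
  then show "addA N x ` grpA N = grpA N"
    using addA_in_grpA[OF assms] by blast
qed

lemma sum_addA_translate:
  "N > 0 \<Longrightarrow> (\<Sum>y\<in>grpA N. f (addA N x y)) = (\<Sum>c\<in>grpA N. f c)"
  using sum.reindex_bij_betw[OF bij_betw_addA] by blast

lemma card_grpA_pos: "N > 0 \<Longrightarrow> card (grpA N) > 0"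
  by (auto simp: grpA_def card_gt_0_iff)

lemma aug_scale: "f \<in> aug N \<Longrightarrow> (\<lambda>c. r * f c) \<in> aug N"
  by (simp add: aug_def QA_def sum_distrib_left[symmetric])

definition add_lift :: "int \<Rightarrow> (elt \<Rightarrow> rat) \<Rightarrow> (elt \<Rightarrow> elt \<Rightarrow> rat)" where
  "add_lift N g = (\<lambda>x y. if x \<in> grpA N \<and> y \<in> grpA N then g (addA N x y) else 0)"

lemma add_lift_in_epsPart:
  assumes "N > 0" "g \<in> aug N"
  shows "add_lift N g \<in> epsPart N"
proof -
  have sum_g: "(\<Sum>c\<in>grpA N. g c) = 0"
    using assms(2) by (simp add: aug_def)
  have "(\<Sum>y\<in>grpA N. add_lift N g x y) = 0" for x
    using sum_addA_translate[OF assms(1), of g x] sum_g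
    by (cases "x \<in> grpA N") (simp_all add: add_lift_def)
  moreover have "(\<Sum>x\<in>grpA N. add_lift N g x y) = 0" for y
    using sum_addA_translate[OF assms(1), of g y] sum_g
    by (cases "y \<in> grpA N") (simp_all add: add_lift_def addA_commute)
  moreover have "hact N h (add_lift N g) = (\<lambda>x y. eps h * add_lift N g x y)" for h
  proof -
    have swap: "addA N (addA N y (fst h)) (addA N x (negA N (fst h))) = addA N x y" for x y
      using addA_translate addA_commute by metis
    show ?thesis
      by (intro ext) (simp add: hact_def eps_def add_lift_def addA_in_grpA[OF assms(1)]
          addA_translate swap)
  qed
  ultimately show ?thesis
    by (simp add: epsPart_def augTensor_def QA2_def add_lift_def)
qed

lemma epsPart_vanishes: "F \<in> epsPart N \<Longrightarrow> x \<notin> grpA N \<or> y \<notin> grpA N \<Longrightarrow> F x y = 0"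
  unfolding epsPart_def augTensor_def QA2_def by blast

lemma epsPart_eq_add_lift:
  assumes "N > 0" "F \<in> epsPart N"
  shows "F = add_lift N (\<lambda>c. F c (0, 0))"
proof (intro ext)
  fix x y
  have "negA N y \<in> grpA N"
    using assms(1) by (simp add: negA_def grpA_def)
  moreover have invariant: "hact N h F = (\<lambda>u v. eps h * F u v)" if "fst h \<in> grpA N" for h
    using assms(2) that unfolding epsPart_def by blast
  ultimately have inv: "hact N (negA N y, True) F = (\<lambda>u v. F u v)"
    using invariant[of "(negA N y, True)"] by (simp add: eps_def)
  show "F x y = add_lift N (\<lambda>c. F c (0, 0)) x y"
  proof (cases "x \<in> grpA N \<and> y \<in> grpA N")
    case True
    then have "F x y = F (addA N x y) (addA N y (negA N y))"
      using fun_cong[OF fun_cong[OF inv, of x], of y] by (simp add: hact_def negA_negA[OF assms(1)])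
    then show ?thesis
      using True by (simp add: add_lift_def addA_negA_right)
  next
    case False
    then show ?thesis
      using epsPart_vanishes[OF assms(2)] by (auto simp: add_lift_def)
  qed
qed

lemma epsPart_base_in_aug: "F \<in> epsPart N \<Longrightarrow> (\<lambda>c. F c (0, 0)) \<in> aug N"
  using epsPart_vanishes[of F N] unfolding aug_def QA_def epsPart_def augTensor_def by blast

lemma mu_add_lift:
  assumes "N > 0" "g \<in> QA N"
  shows "mu N (add_lift N g) = (\<lambda>c. of_nat (card (grpA N)) * g c)"
proof
  fix c
  show "mu N (add_lift N g) c = of_nat (card (grpA N)) * g c"
  proof (cases "c \<in> grpA N")
    case c: True
    have "(\<Sum>y\<in>grpA N. if addA N x y = c then add_lift N g x y else 0) = g c"
      if x: "x \<in> grpA N" for x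
    proof -
      have "addA N x (addA N c (negA N x)) = c"
        using addA_eq_iff[OF assms(1) addA_in_grpA[OF assms(1)] c] by simp
      then have "(\<Sum>y\<in>grpA N. if addA N x y = c then add_lift N g x y else 0)
          = (\<Sum>y\<in>grpA N. if y = addA N c (negA N x) then g c else 0)"
        using addA_eq_iff[OF assms(1) _ c, of _ x] x by (intro sum.cong) (auto simp: add_lift_def)
      also have "\<dots> = g c"
        using addA_in_grpA[OF assms(1)] by (simp add: grpA_def)
      finally show ?thesis .
    qed
    then show ?thesis
      using c by (simp add: mu_def)
  next
    case False
    moreover have "g c = 0"
      using assms(2) False unfolding QA_def by blast
    ultimately show ?thesis
      by (simp add: mu_def)
  qed
qed

theorem lemma5p10:
  fixes N :: int
  assumes "N \<ge> 3"
  shows "bij_betw (mu N) (epsPart N) (aug N)"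
proof -
  have N: "N > 0" using assms by simp
  define K :: rat where "K = of_nat (card (grpA N))"
  have K: "K \<noteq> 0" using card_grpA_pos[OF N] by (simp add: K_def)
  have mu_eps: "mu N F = (\<lambda>c. K * F c (0, 0))" if F: "F \<in> epsPart N" for F
  proof -
    have "mu N F = mu N (add_lift N (\<lambda>c. F c (0, 0)))"
      using epsPart_eq_add_lift[OF N F] by (rule arg_cong)
    also have "\<dots> = (\<lambda>c. K * F c (0, 0))"
      using mu_add_lift[OF N] epsPart_base_in_aug[OF F] by (simp add: aug_def K_def)
    finally show ?thesis .
  qed
  show ?thesis
  proof (rule bij_betw_imageI)
    show "inj_on (mu N) (epsPart N)"
    proof (rule inj_onI)
      fix F G assume F: "F \<in> epsPart N" and G: "G \<in> epsPart N" and "mu N F = mu N G"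
      then have "(\<lambda>c. F c (0, 0)) = (\<lambda>c. G c (0, 0))"
        using mu_eps K by (simp add: fun_eq_iff)
      then show "F = G"
        using epsPart_eq_add_lift[OF N F] epsPart_eq_add_lift[OF N G] by simp
    qed
    have "f \<in> mu N ` epsPart N" if f: "f \<in> aug N" for f
    proof -
      have g: "(\<lambda>c. inverse K * f c) \<in> aug N" using aug_scale[OF f] .
      then have "mu N (add_lift N (\<lambda>c. inverse K * f c)) = f"
        using mu_add_lift[OF N] K by (simp add: aug_def K_def[symmetric] mult.assoc[symmetric])
      then show ?thesis
        using add_lift_in_epsPart[OF N g] by (metis imageI)
    qed
    moreover have "mu N F \<in> aug N" if "F \<in> epsPart N" for F
      using mu_eps[OF that] aug_scale[OF epsPart_base_in_aug[OF that]] by simp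
    ultimately show "mu N ` epsPart N = aug N" by blast
  qed
qed

end
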